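(* Let $m_1<m_2<\dots<m_k<m_{k+1}=n$ be positive integers with $m_i\mid m_{i+1}$ for all $1\le i\le k$. Let $\alpha$ be a primitive element of $\mathbb{F}_{q^n}$, $\alpha_i=\alpha^{(q^n-1)/(q^{m_i}-1)}$ (a primitive element of $\mathbb{F}_{q^{m_i}}$) and $L_{i}=m_{i}/m_{i-1}$ for $2\le i\le k+1$. For $1\le i\le k$ let $\mathcal{F}^i$ be the flag of type $(m_i,2m_i,\dots,m_{i+1}-m_i)$ with subspaces $\mathcal{F}^i_j=\bigoplus_{t=0}^{j-1}\mathbb{F}_{q^{m_i}}\alpha_{i+1}^t$, $1\le j\le L_{i+1}-1$. Then for each $1\le i\le k$, the code $\mathrm{Orb}(\mathcal{F}^i)$ is consistent, has minimum distance $2(m_{i+1}-m_i)$, and has $\mathbb{F}_{q^{m_i}}$ as its best friend.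
   Context: $q$ prime power; subspaces are $\mathbb{F}_q$-subspaces of $\mathbb{F}_{q^n}$; a flag is a chain $\{0\}\subsetneq\mathcal{F}_1\subsetneq\cdots\subsetneq\mathcal{F}_r\subsetneq\mathbb{F}_{q^n}$. $d_S(\mathcal{U},\mathcal{V})=\dim(\mathcal{U}+\mathcal{V})-\dim(\mathcal{U}\cap\mathcal{V})$, $d_f(\mathcal{F},\mathcal{F}')=\sum_i d_S(\mathcal{F}_i,\mathcal{F}'_i)$, $\mathrm{Orb}(\mathcal{F})=\{\mathcal{F}\alpha^j:j\ge0\}$ with $\mathcal{F}\alpha^j=(\mathcal{F}_1\alpha^j,\dots)$; the minimum distance of a code is the minimum distance between distinct codewords ($0$ if there is only one). The $i$-th projected code of a flag code $\mathcal{C}$ is $\mathcal{C}_i=\{\mathcal{F}_i:\mathcal{F}\in\mathcal{C}\}$; $\mathcal{C}$ is disjoint if $|\mathcal{C}_i|=|\mathcal{C}|$ for all $i$, and consistent if it is disjoint and $d_f(\mathcal{C})=\sum_i d_S(\mathcal{C}_i)$. A subfield $\mathbb{F}_{q^m}$ is a friend of a subspace if the subspace is an $\mathbb{F}_{q^m}$-vector space; a friend of a flag is a common friend of all its subspaces; the best friend is the largest friend. *)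

theory Defs
  imports Main "HOL-Computational_Algebra.Primes"
begin

text \<open>Ambient field: a finite field type 'a of cardinality q^n, i.e. F_{q^n}.
  The subfield F_{q^m} (m dividing n) is the set of roots of x^(q^m) = x.\<close>

definition Fqm :: "nat \<Rightarrow> nat \<Rightarrow> 'a::{field,finite} set" where
  "Fqm q m = {x. x ^ (q ^ m) = x}"

definition is_prime_power :: "nat \<Rightarrow> bool" where
  "is_prime_power q \<longleftrightarrow> (\<exists>p e. prime p \<and> e > 0 \<and> q = p ^ e)"

definition primitive_elem :: "'a::{field,finite} \<Rightarrow> bool" where
  "primitive_elem a \<longleftrightarrow> (\<forall>x. x \<noteq> 0 \<longrightarrow> (\<exists>j::nat. a ^ j = x))"

definition span_Fq :: "nat \<Rightarrow> 'a::{field,finite} list \<Rightarrow> 'a set" where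
  "span_Fq q vs = {(\<Sum>i<length vs. c i * vs ! i) | c. \<forall>i. c i \<in> Fqm q 1}"

definition subspace_Fq :: "nat \<Rightarrow> 'a::{field,finite} set \<Rightarrow> bool" where
  "subspace_Fq q U \<longleftrightarrow> 0 \<in> U \<and> (\<forall>u\<in>U. \<forall>v\<in>U. u + v \<in> U)
      \<and> (\<forall>c\<in>Fqm q 1. \<forall>u\<in>U. c * u \<in> U)"

definition dim_Fq :: "nat \<Rightarrow> 'a::{field,finite} set \<Rightarrow> nat" where
  "dim_Fq q U = (LEAST d. \<exists>vs. length vs = d \<and> set vs \<subseteq> U \<and> span_Fq q vs = U)"

definition subsp_sum :: "'a::{field,finite} set \<Rightarrow> 'a set \<Rightarrow> 'a set" where
  "subsp_sum U V = {u + v | u v. u \<in> U \<and> v \<in> V}"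

definition subspace_dist :: "nat \<Rightarrow> 'a::{field,finite} set \<Rightarrow> 'a set \<Rightarrow> nat" where
  "subspace_dist q U V = dim_Fq q (subsp_sum U V) - dim_Fq q (U \<inter> V)"

definition flag_dist :: "nat \<Rightarrow> 'a::{field,finite} set list \<Rightarrow> 'a set list \<Rightarrow> nat" where
  "flag_dist q F G = (\<Sum>i<length F. subspace_dist q (F ! i) (G ! i))"

definition min_dist :: "('b \<Rightarrow> 'b \<Rightarrow> nat) \<Rightarrow> 'b set \<Rightarrow> nat" where
  "min_dist d C = (if card C \<le> 1 then 0
                   else Min {d x y | x y. x \<in> C \<and> y \<in> C \<and> x \<noteq> y})"

definition flag_orbit :: "'a::{field,finite} \<Rightarrow> 'a set list \<Rightarrow> 'a set list set" where
  "flag_orbit a F = {map (\<lambda>U. (\<lambda>x. x * a ^ j) ` U) F | j::nat. True}"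

text \<open>Projected codes, indexed 0..r-1 (i.e. C_{i+1} in the paper's numbering).\<close>

definition projected_code :: "'a set list set \<Rightarrow> nat \<Rightarrow> 'a set set" where
  "projected_code C i = {F ! i | F. F \<in> C}"

definition disjoint_code :: "nat \<Rightarrow> 'a set list set \<Rightarrow> bool" where
  "disjoint_code r C \<longleftrightarrow> (\<forall>i<r. card (projected_code C i) = card C)"

definition consistent_code :: "nat \<Rightarrow> nat \<Rightarrow> 'a::{field,finite} set list set \<Rightarrow> bool" where
  "consistent_code q r C \<longleftrightarrow> disjoint_code r C \<and>
     min_dist (flag_dist q) C = (\<Sum>i<r. min_dist (subspace_dist q) (projected_code C i))"

definition friend_subspace :: "nat \<Rightarrow> nat \<Rightarrow> nat \<Rightarrow> 'a::{field,finite} set \<Rightarrow> bool" where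
  "friend_subspace q n m U \<longleftrightarrow> m dvd n \<and> 0 \<in> U \<and> (\<forall>u\<in>U. \<forall>v\<in>U. u + v \<in> U)
      \<and> (\<forall>c\<in>Fqm q m. \<forall>u\<in>U. c * u \<in> U)"

definition friend_code :: "nat \<Rightarrow> nat \<Rightarrow> nat \<Rightarrow> 'a::{field,finite} set list set \<Rightarrow> bool" where
  "friend_code q n m C \<longleftrightarrow> m dvd n \<and> (\<forall>F\<in>C. \<forall>U\<in>set F. friend_subspace q n m U)"

definition best_friend_code :: "nat \<Rightarrow> nat \<Rightarrow> nat \<Rightarrow> 'a::{field,finite} set list set \<Rightarrow> bool" where
  "best_friend_code q n m C \<longleftrightarrow> friend_code q n m C \<and>
     (\<forall>m'. friend_code q n m' C \<longrightarrow> (Fqm q m' :: 'a set) \<subseteq> Fqm q m)"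

text \<open>The flag F^i: subspaces F_j = sum_{t<j} F_{q^{m_i}} beta^t for j = 1..L-1,
  where beta = alpha_{i+1} and L = m_{i+1}/m_i.\<close>

definition tower_flag :: "nat \<Rightarrow> nat \<Rightarrow> nat \<Rightarrow> 'a::{field,finite} \<Rightarrow> 'a set list" where
  "tower_flag q mi L beta =
     map (\<lambda>j. {(\<Sum>t<j. c t * beta ^ t) | c. \<forall>t. c t \<in> Fqm q mi}) [1..<L]"

end

theory Submission
  imports Defs "HOL-Number_Theory.Residues"
begin

text \<open>Write K = F_{q^{m_i}}, \<beta> = \<alpha>_{i+1}, L = m_{i+1}/m_i and
  V_j = K + K\<beta> + ... + K\<beta>^{j-1}; the codewords are the flags (V_1, ..., V_{L-1}) \<alpha>^s.
  For j \<le> L the sum is direct, so V_j has K-dimension j. The key fact is that for 1 \<le> j < L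
  the multiplicative stabiliser A = {x. x V_j \<subseteq> V_j} equals K: A is a field between K and V_j,
  and V_j and V_j \<inter> \<beta>V_j are A-spaces of K-dimension j and j - 1, so [A : K] divides both.
  Hence two codewords agreeing in one subspace differ by a factor from K and coincide, which gives
  disjointness, and distinct subspaces in the same position are K-spaces of equal dimension, at
  distance at least 2 m_i. The codewords for s = 0 and \<alpha>^s = \<beta> attain this bound in every
  position, since V_j + \<beta>V_j \<subseteq> V_{j+1} and V_j \<inter> \<beta>V_j \<supseteq> \<beta>V_{j-1}. Finally V_1 = K contains 1,
  so every friend of the code is contained in K.\<close>

section \<open>Subspaces over subfields\<close>

definition is_subfield :: "'a::{field,finite} set \<Rightarrow> bool" where
  "is_subfield F \<longleftrightarrow> 0 \<in> F \<and> 1 \<in> F \<and> (\<forall>x\<in>F. \<forall>y\<in>F. x + y \<in> F \<and> x * y \<in> F \<and> x - y \<in> F)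
     \<and> (\<forall>x\<in>F. x \<noteq> 0 \<longrightarrow> inverse x \<in> F)"

definition subspace_over :: "'a::{field,finite} set \<Rightarrow> 'a set \<Rightarrow> bool" where
  "subspace_over F W \<longleftrightarrow> 0 \<in> W \<and> (\<forall>u\<in>W. \<forall>v\<in>W. u + v \<in> W) \<and> (\<forall>c\<in>F. \<forall>u\<in>W. c * u \<in> W)"

definition span_over :: "'a::{field,finite} set \<Rightarrow> nat \<Rightarrow> (nat \<Rightarrow> 'a) \<Rightarrow> 'a set" where
  "span_over F j f = {(\<Sum>t<j. c t * f t) | c. \<forall>t. c t \<in> F}"

definition stabilizer :: "'a::{field,finite} set \<Rightarrow> 'a set" where
  "stabilizer U = {y. \<forall>v\<in>U. y * v \<in> U}"

definition scale :: "'a::{field,finite} \<Rightarrow> 'a set \<Rightarrow> 'a set" where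
  "scale y U = (\<lambda>v. v * y) ` U"

lemma is_subfieldD:
  assumes "is_subfield F"
  shows is_subfield_0: "0 \<in> F" and is_subfield_1: "1 \<in> F"
    and is_subfield_add: "x \<in> F \<Longrightarrow> y \<in> F \<Longrightarrow> x + y \<in> F"
    and is_subfield_mult: "x \<in> F \<Longrightarrow> y \<in> F \<Longrightarrow> x * y \<in> F"
    and is_subfield_diff: "x \<in> F \<Longrightarrow> y \<in> F \<Longrightarrow> x - y \<in> F"
    and is_subfield_inverse: "x \<in> F \<Longrightarrow> x \<noteq> 0 \<Longrightarrow> inverse x \<in> F"
  using assms unfolding is_subfield_def by blast+

lemma subspace_overD:
  assumes "subspace_over F W"
  shows subspace_over_0: "0 \<in> W"
    and subspace_over_add: "u \<in> W \<Longrightarrow> v \<in> W \<Longrightarrow> u + v \<in> W"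
    and subspace_over_smult: "c \<in> F \<Longrightarrow> u \<in> W \<Longrightarrow> c * u \<in> W"
  using assms unfolding subspace_over_def by blast+

lemma subspace_overI:
  assumes "0 \<in> W" "\<And>u v. u \<in> W \<Longrightarrow> v \<in> W \<Longrightarrow> u + v \<in> W"
    "\<And>c u. c \<in> F \<Longrightarrow> u \<in> W \<Longrightarrow> c * u \<in> W"
  shows "subspace_over F W"
  using assms unfolding subspace_over_def by blast

lemma is_subfield_card_ge_2: "is_subfield F \<Longrightarrow> 2 \<le> card F"
proof -
  assume "is_subfield F"
  hence "{0, 1} \<subseteq> F" by (simp add: is_subfield_0 is_subfield_1)
  hence "card {0, 1 :: 'a} \<le> card F" by (intro card_mono) auto
  thus ?thesis by simp
qed

lemma subspace_over_diff:
  assumes "is_subfield F" "subspace_over F W" "u \<in> W" "v \<in> W"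
  shows "u - v \<in> W"
proof -
  have "0 - 1 \<in> F" using is_subfield_diff[OF assms(1) is_subfield_0[OF assms(1)] is_subfield_1[OF assms(1)]] .
  hence "u + (0 - 1) * v \<in> W" using assms(2-4) by (intro subspace_over_add subspace_over_smult)
  thus ?thesis by simp
qed

lemma subspace_over_subfield: "subspace_over F W \<Longrightarrow> E \<subseteq> F \<Longrightarrow> subspace_over E W"
  unfolding subspace_over_def by blast

lemma subspace_over_Int: "subspace_over F U \<Longrightarrow> subspace_over F W \<Longrightarrow> subspace_over F (U \<inter> W)"
  unfolding subspace_over_def by blast

lemma mem_subsp_sum: "x \<in> subsp_sum U W \<longleftrightarrow> (\<exists>u\<in>U. \<exists>w\<in>W. x = u + w)"
  unfolding subsp_sum_def by blast

lemma subspace_over_subsp_sum: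
  assumes U: "subspace_over F U" and W: "subspace_over F W"
  shows "subspace_over F (subsp_sum U W)"
proof -
  have "0 \<in> subsp_sum U W"
    using U W unfolding mem_subsp_sum by (metis add_0 subspace_over_0)
  moreover have "a + b \<in> subsp_sum U W" if ab: "a \<in> subsp_sum U W" "b \<in> subsp_sum U W" for a b
  proof -
    obtain u w u' w' where "u \<in> U" "w \<in> W" "u' \<in> U" "w' \<in> W" "a = u + w" "b = u' + w'"
      using ab unfolding mem_subsp_sum by blast
    moreover from this have "u + u' \<in> U" "w + w' \<in> W" using U W by (simp_all add: subspace_over_add)
    ultimately show ?thesis unfolding mem_subsp_sum by (metis add.assoc add.left_commute)
  qed
  moreover have "c * a \<in> subsp_sum U W" if c: "c \<in> F" and a: "a \<in> subsp_sum U W" for c a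
  proof -
    obtain u w where "u \<in> U" "w \<in> W" "a = u + w" using a unfolding mem_subsp_sum by blast
    moreover from this have "c * u \<in> U" "c * w \<in> W" using U W c by (simp_all add: subspace_over_smult)
    ultimately show ?thesis unfolding mem_subsp_sum by (metis distrib_left)
  qed
  ultimately show ?thesis by (rule subspace_overI)
qed

lemma subsp_sum_subset: "subspace_over F X \<Longrightarrow> U \<subseteq> X \<Longrightarrow> W \<subseteq> X \<Longrightarrow> subsp_sum U W \<subseteq> X"
  unfolding mem_subsp_sum subset_iff by (metis subspace_over_add)

lemma subset_subsp_sum_left: "subspace_over F W \<Longrightarrow> U \<subseteq> subsp_sum U W"
  unfolding mem_subsp_sum subset_iff by (metis add_0_right subspace_over_0)

lemma subset_subsp_sum_right: "subspace_over F U \<Longrightarrow> W \<subseteq> subsp_sum U W"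
  unfolding mem_subsp_sum subset_iff by (metis add_0 subspace_over_0)

lemma subspace_over_scale:
  assumes "subspace_over F U" shows "subspace_over F (scale y U)"
proof (rule subspace_overI)
  show "0 \<in> scale y U" using subspace_over_0[OF assms] unfolding scale_def by force
  show "u + v \<in> scale y U" if "u \<in> scale y U" "v \<in> scale y U" for u v
    using that subspace_over_add[OF assms] unfolding scale_def by (auto simp flip: distrib_right)
  show "c * u \<in> scale y U" if "c \<in> F" "u \<in> scale y U" for c u
    using that subspace_over_smult[OF assms] unfolding scale_def by (auto simp: mult.assoc)
qed

lemma card_scale: "y \<noteq> 0 \<Longrightarrow> card (scale y U) = card U"
  unfolding scale_def by (rule card_image) (auto simp: inj_on_def)

lemma scale_scale: "scale b (scale a U) = scale (a * b) U"
  unfolding scale_def image_image by (simp add: mult.assoc)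

lemma scale_1 [simp]: "scale 1 U = U"
  unfolding scale_def by simp

lemma scale_subfield_element:
  assumes "subspace_over F U" "x \<in> F" "x \<noteq> 0"
  shows "scale x U = U"
proof -
  have "scale x U \<subseteq> U"
    using subspace_over_smult[OF assms(1,2)] unfolding scale_def by (auto simp: mult.commute)
  with card_scale[OF assms(3)] show ?thesis by (simp add: card_subset_eq)
qed

lemma span_over_sumI: "(\<And>t. c t \<in> F) \<Longrightarrow> (\<Sum>t<j. c t * f t) \<in> span_over F j f"
  unfolding span_over_def by blast

lemma span_over_sumE:
  assumes "x \<in> span_over F j f"
  obtains c where "\<And>t. c t \<in> F" "x = (\<Sum>t<j. c t * f t)"
  using assms unfolding span_over_def by blast

lemma span_over_cong:
  assumes "\<And>t. t < j \<Longrightarrow> f t = g t" shows "span_over F j f = span_over F j g"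
proof -
  have "\<And>c. (\<Sum>t<j. c t * f t) = (\<Sum>t<j. c t * g t)" by (intro sum.cong) (auto simp: assms)
  thus ?thesis unfolding span_over_def by simp
qed

lemma span_over_0:
  assumes "is_subfield F" shows "span_over F 0 f = {0}"
proof
  show "span_over F 0 f \<subseteq> {0}" unfolding span_over_def by auto
  show "{0} \<subseteq> span_over F 0 f" using span_over_sumI[of "\<lambda>_. 0" F f 0] is_subfield_0[OF assms] by simp
qed

lemma span_over_Suc:
  assumes "is_subfield F"
  shows "span_over F (Suc j) f = {c * f j + x | c x. c \<in> F \<and> x \<in> span_over F j f}"
proof (intro Set.set_eqI iffI)
  fix y assume "y \<in> span_over F (Suc j) f"
  then obtain c where c: "\<forall>t. c t \<in> F" "y = (\<Sum>t<Suc j. c t * f t)"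
    unfolding span_over_def by blast
  hence "y = c j * f j + (\<Sum>t<j. c t * f t)" by simp
  moreover have "(\<Sum>t<j. c t * f t) \<in> span_over F j f" using c unfolding span_over_def by blast
  ultimately show "y \<in> {c * f j + x | c x. c \<in> F \<and> x \<in> span_over F j f}" using c by blast
next
  fix y assume "y \<in> {c * f j + x | c x. c \<in> F \<and> x \<in> span_over F j f}"
  then obtain a c where ac: "a \<in> F" "\<forall>t. c t \<in> F" "y = a * f j + (\<Sum>t<j. c t * f t)"
    unfolding span_over_def by blast
  have "(\<Sum>t<j. (c(j := a)) t * f t) = (\<Sum>t<j. c t * f t)" by (intro sum.cong) auto
  hence "y = (\<Sum>t<Suc j. (c(j := a)) t * f t)" using ac by simp
  moreover have "\<forall>t. (c(j := a)) t \<in> F" using ac by simp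
  ultimately show "y \<in> span_over F (Suc j) f" unfolding span_over_def by blast
qed

lemma subspace_over_span_over:
  assumes F: "is_subfield F"
  shows "subspace_over F (span_over F j f)"
proof -
  have "(\<Sum>t<j. 0 * f t) \<in> span_over F j f"
    using is_subfield_0[OF F] by (rule span_over_sumI)
  hence "0 \<in> span_over F j f" by simp
  moreover have "u + v \<in> span_over F j f" if u: "u \<in> span_over F j f" and v: "v \<in> span_over F j f" for u v
  proof -
    obtain c where c: "\<And>t. c t \<in> F" "u = (\<Sum>t<j. c t * f t)" using span_over_sumE[OF u] by blast
    obtain d where d: "\<And>t. d t \<in> F" "v = (\<Sum>t<j. d t * f t)" using span_over_sumE[OF v] by blast
    have "(\<Sum>t<j. (c t + d t) * f t) \<in> span_over F j f"
      using is_subfield_add[OF F c(1) d(1)] by (rule span_over_sumI)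
    thus ?thesis using c(2) d(2) by (simp add: sum.distrib distrib_right)
  qed
  moreover have "a * u \<in> span_over F j f" if a: "a \<in> F" and u: "u \<in> span_over F j f" for a u
  proof -
    obtain c where c: "\<And>t. c t \<in> F" "u = (\<Sum>t<j. c t * f t)" using span_over_sumE[OF u] by blast
    have "(\<Sum>t<j. (a * c t) * f t) \<in> span_over F j f"
      using is_subfield_mult[OF F a c(1)] by (rule span_over_sumI)
    thus ?thesis using c(2) by (simp add: sum_distrib_left mult.assoc)
  qed
  ultimately show ?thesis by (rule subspace_overI)
qed

lemma span_over_generator:
  assumes "is_subfield F" "t < j"
  shows "f t \<in> span_over F j f"
proof -
  have "(\<Sum>s<j. (if s = t then 1 else 0) * f s) \<in> span_over F j f"
    by (rule span_over_sumI) (simp add: is_subfield_0[OF assms(1)] is_subfield_1[OF assms(1)])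
  moreover have "(\<Sum>s<j. (if s = t then 1 else 0) * f s) = (\<Sum>s<j. if s = t then f s else 0)"
    by (intro sum.cong) auto
  ultimately show ?thesis using assms(2) by simp
qed

lemma span_over_subset:
  assumes "is_subfield F" "subspace_over F W" "\<And>t. t < j \<Longrightarrow> f t \<in> W"
  shows "span_over F j f \<subseteq> W"
  using assms(3)
proof (induction j)
  case 0
  then show ?case using span_over_0[OF assms(1)] subspace_over_0[OF assms(2)] by simp
next
  case (Suc j)
  have "c * f j + x \<in> W" if "c \<in> F" "x \<in> W" for c x
    using that Suc.prems assms(2) by (simp add: subspace_over_add subspace_over_smult)
  with Suc show ?case unfolding span_over_Suc[OF assms(1)] by auto
qed

lemma span_over_mult_right:
  assumes "x \<in> span_over F j f" shows "x * y \<in> span_over F j (\<lambda>t. f t * y)"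
proof -
  obtain c where c: "\<And>t. c t \<in> F" "x = (\<Sum>t<j. c t * f t)" using span_over_sumE[OF assms] by blast
  have "(\<Sum>t<j. c t * (f t * y)) \<in> span_over F j (\<lambda>t. f t * y)" using c(1) by (rule span_over_sumI)
  thus ?thesis using c(2) by (simp add: sum_distrib_right mult.assoc)
qed

lemma card_span_over_le:
  assumes "is_subfield F"
  shows "card (span_over F j f) \<le> card F ^ j"
proof (induction j)
  case 0 then show ?case using span_over_0[OF assms] by simp
next
  case (Suc j)
  have "span_over F (Suc j) f = (\<lambda>(c, x). c * f j + x) ` (F \<times> span_over F j f)"
    unfolding span_over_Suc[OF assms] by auto
  hence "card (span_over F (Suc j) f) \<le> card (F \<times> span_over F j f)"
    by (simp only:) (rule card_image_le, simp)
  also have "\<dots> = card F * card (span_over F j f)" by (simp add: card_cartesian_product)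
  also have "\<dots> \<le> card F * card F ^ j" using Suc by simp
  finally show ?case by simp
qed

lemma card_subspace_extension:
  assumes "is_subfield F" "subspace_over F W" "u \<notin> W"
  shows "card {c * u + x | c x. c \<in> F \<and> x \<in> W} = card F * card W"
proof -
  have inj: "c = c' \<and> x = x'"
    if h: "c \<in> F" "x \<in> W" "c' \<in> F" "x' \<in> W" "c * u + x = c' * u + x'" for c x c' x'
  proof -
    have "c = c'"
    proof (rule ccontr)
      assume ne: "c \<noteq> c'"
      have "inverse (c - c') \<in> F"
        using h(1,3) ne assms(1) by (simp add: is_subfield_diff is_subfield_inverse)
      moreover have "x' - x \<in> W" using subspace_over_diff[OF assms(1,2) h(4) h(2)] .
      ultimately have "inverse (c - c') * (x' - x) \<in> W" by (rule subspace_over_smult[OF assms(2)])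
      moreover have "(c - c') * u = x' - x" using h(5) by (simp add: algebra_simps)
      hence "inverse (c - c') * (x' - x) = u" using ne by (metis divide_inverse_commute eq_iff_diff_eq_0 nonzero_mult_div_cancel_left)
      ultimately show False using assms(3) by simp
    qed
    with h(5) show ?thesis by simp
  qed
  have "{c * u + x | c x. c \<in> F \<and> x \<in> W} = (\<lambda>(c, x). c * u + x) ` (F \<times> W)" by auto
  moreover have "inj_on (\<lambda>(c, x). c * u + x) (F \<times> W)" by (rule inj_onI) (use inj in auto)
  ultimately show ?thesis by (simp add: card_image card_cartesian_product)
qed

lemma card_psubspace:
  assumes "is_subfield F" "subspace_over F W" "subspace_over F U" "W \<subset> U"
  shows "card F * card W \<le> card U"
proof -
  obtain u where u: "u \<in> U" "u \<notin> W" using assms(4) by blast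
  have "{c * u + x | c x. c \<in> F \<and> x \<in> W} \<subseteq> U"
    using u assms(2-4) by (auto intro: subspace_over_add subspace_over_smult)
  hence "card {c * u + x | c x. c \<in> F \<and> x \<in> W} \<le> card U" by (simp add: card_mono)
  thus ?thesis using card_subspace_extension[OF assms(1,2) u(2)] by simp
qed

lemma psubspace_exponent_less:
  assumes "is_subfield F" "subspace_over F W" "subspace_over F U" "W \<subset> U"
    and "card W = card F ^ a" "card U = card F ^ b"
  shows "a < b"
proof -
  have "card F ^ Suc a \<le> card F ^ b" using card_psubspace[OF assms(1-4)] assms(5,6) by simp
  hence "Suc a \<le> b" using is_subfield_card_ge_2[OF assms(1)] by (intro power_le_imp_le_exp) auto
  thus ?thesis by simp
qed

lemma subspace_over_basis:
  assumes "is_subfield F" "subspace_over F W"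
  shows "\<exists>g j. (\<forall>t<j. g t \<in> W) \<and> span_over F j g = W \<and> card W = card F ^ j"
proof -
  have extend: "(\<forall>t<j. f t \<in> W) \<Longrightarrow> card (span_over F j f) = card F ^ j \<Longrightarrow> ?thesis" for j f
  proof (induction "card W - card (span_over F j f)" arbitrary: j f rule: less_induct)
    case less
    have sub: "span_over F j f \<subseteq> W" using span_over_subset[OF assms] less.prems by blast
    show ?case
    proof (cases "span_over F j f = W")
      case True then show ?thesis using less.prems by (intro exI[of _ f] exI[of _ j]) simp
    next
      case False
      then obtain u where u: "u \<in> W" "u \<notin> span_over F j f" using sub by blast
      define f' where "f' = f(j := u)"
      have same: "span_over F j f' = span_over F j f" unfolding f'_def by (rule span_over_cong) simp
      have f'W: "\<forall>t<Suc j. f' t \<in> W" using less.prems u unfolding f'_def by (auto simp: less_Suc_eq)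
      have "span_over F (Suc j) f' = {c * u + x | c x. c \<in> F \<and> x \<in> span_over F j f}"
        unfolding span_over_Suc[OF assms(1)] same by (simp add: f'_def)
      hence "card (span_over F (Suc j) f') = card F * card (span_over F j f)"
        using card_subspace_extension[OF assms(1) subspace_over_span_over[OF assms(1)] u(2)] by simp
      hence card: "card (span_over F (Suc j) f') = card F ^ Suc j" using less.prems by simp
      have "card (span_over F j f) < card (span_over F (Suc j) f')"
        using card less.prems is_subfield_card_ge_2[OF assms(1)] by simp
      moreover have "card (span_over F (Suc j) f') \<le> card W"
        using span_over_subset[OF assms] f'W by (simp add: card_mono)
      ultimately have "card W - card (span_over F (Suc j) f') < card W - card (span_over F j f)"
        by linarith
      from less.hyps[OF this f'W card] show ?thesis .
    qed
  qed
  have "card (span_over F 0 f) = card F ^ 0" for f using span_over_0[OF assms(1)] by simp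
  with extend[of 0] show ?thesis by blast
qed

lemma subspace_over_card_power:
  "is_subfield F \<Longrightarrow> subspace_over F W \<Longrightarrow> \<exists>e. card W = card F ^ e"
  using subspace_over_basis by blast

lemma is_subfield_stabilizer:
  assumes F: "is_subfield F" and U: "subspace_over F U"
  shows "is_subfield (stabilizer U)"
proof -
  have add: "y + z \<in> stabilizer U" if "y \<in> stabilizer U" "z \<in> stabilizer U" for y z
  proof -
    have "y * v + z * v \<in> U" if "v \<in> U" for v
      using \<open>y \<in> stabilizer U\<close> \<open>z \<in> stabilizer U\<close> that subspace_over_add[OF U]
      unfolding stabilizer_def by blast
    thus ?thesis unfolding stabilizer_def by (simp add: distrib_right)
  qed
  have diff: "y - z \<in> stabilizer U" if "y \<in> stabilizer U" "z \<in> stabilizer U" for y z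
  proof -
    have "y * v - z * v \<in> U" if "v \<in> U" for v
      using \<open>y \<in> stabilizer U\<close> \<open>z \<in> stabilizer U\<close> that subspace_over_diff[OF F U]
      unfolding stabilizer_def by blast
    thus ?thesis unfolding stabilizer_def by (simp add: left_diff_distrib)
  qed
  have mult: "y * z \<in> stabilizer U" if "y \<in> stabilizer U" "z \<in> stabilizer U" for y z
    using that unfolding stabilizer_def by (simp add: mult.assoc)
  have inv: "inverse y \<in> stabilizer U" if "y \<in> stabilizer U" "y \<noteq> 0" for y
  proof -
    have "scale y U \<subseteq> U" using that(1) unfolding stabilizer_def scale_def by (auto simp: mult.commute)
    hence eq: "scale y U = U" using card_scale[OF \<open>y \<noteq> 0\<close>] by (simp add: card_subset_eq)
    have "inverse y * v \<in> U" if "v \<in> U" for v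
    proof -
      have "v \<in> scale y U" using \<open>v \<in> U\<close> eq by simp
      then obtain w where "w \<in> U" "v = w * y" unfolding scale_def by blast
      thus ?thesis using \<open>y \<noteq> 0\<close> by (simp add: mult.left_commute)
    qed
    thus ?thesis unfolding stabilizer_def by blast
  qed
  have "0 \<in> stabilizer U" "1 \<in> stabilizer U"
    using subspace_over_0[OF U] unfolding stabilizer_def by simp_all
  with add diff mult inv show ?thesis unfolding is_subfield_def by (intro conjI ballI impI) simp_all
qed

lemma subfield_subset_stabilizer:
  assumes "subspace_over F U" shows "F \<subseteq> stabilizer U"
  unfolding stabilizer_def by (auto intro: subspace_over_smult[OF assms])

lemma subspace_over_stabilizer:
  assumes "subspace_over F U" shows "subspace_over (stabilizer U) U"
  using subspace_over_0[OF assms] subspace_over_add[OF assms]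
  unfolding stabilizer_def by (intro subspace_overI) simp_all

lemma subspace_over_subfield_superset:
  assumes "is_subfield E" "F \<subseteq> E" shows "subspace_over F E"
  using is_subfield_0[OF assms(1)] is_subfield_add[OF assms(1)] is_subfield_mult[OF assms(1)] assms(2)
  by (intro subspace_overI) auto

section \<open>Finite fields with a primitive element\<close>

lemma power_minus_one_dvd:
  fixes q :: nat assumes "1 \<le> q" "d dvd n" shows "(q ^ d - 1) dvd (q ^ n - 1)"
proof -
  obtain c where n: "n = d * c" using assms(2) by blast
  have "[q ^ d = 1] (mod q ^ d - 1)" using assms(1) by (simp add: cong_altdef_nat)
  hence "[(q ^ d) ^ c = 1] (mod q ^ d - 1)" using cong_pow by fastforce
  thus ?thesis unfolding n power_mult by (rule cong_to_1_nat)
qed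

lemma power_mod_of_power_eq_1:
  fixes x :: "'a::monoid_mult"
  assumes "x ^ e = 1" shows "x ^ j = x ^ (j mod e)"
proof -
  have "x ^ j = x ^ (e * (j div e) + j mod e)" by simp
  also have "\<dots> = (x ^ e) ^ (j div e) * x ^ (j mod e)" by (simp only: power_add power_mult)
  finally show ?thesis using assms by simp
qed

locale primitive_field =
  fixes q n :: nat and \<alpha> :: "'a::{field,finite}"
  assumes prime_power: "is_prime_power q"
    and card_UNIV: "card (UNIV :: 'a set) = q ^ n"
    and two_le_n: "2 \<le> n"
    and primitive: "primitive_elem \<alpha>"
begin

definition card_units :: nat where "card_units = q ^ n - 1"

lemma q_ge_2: "2 \<le> q"
proof -
  obtain p e where "prime p" "e > 0" "q = p ^ e" using prime_power unfolding is_prime_power_def by blast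
  hence "p \<le> q" using self_le_power[of p e] prime_gt_0_nat[of p] by simp
  thus ?thesis using prime_ge_2_nat[OF \<open>prime p\<close>] by simp
qed

lemma card_UNIV_ge_4: "4 \<le> q ^ n"
proof -
  have "q ^ 2 \<le> q ^ n" using two_le_n q_ge_2 by (intro power_increasing) auto
  moreover have "4 \<le> q ^ 2" using mult_le_mono[OF q_ge_2 q_ge_2] by (simp add: power2_eq_square)
  ultimately show ?thesis by simp
qed

lemma card_nonzero: "card (UNIV - {0 :: 'a}) = card_units"
  using card_UNIV unfolding card_units_def by (simp add: card_Diff_singleton)

lemma card_units_pos: "0 < card_units"
  using card_UNIV_ge_4 unfolding card_units_def by simp

lemma alpha_nonzero: "\<alpha> \<noteq> 0"
proof
  assume "\<alpha> = 0"
  hence "UNIV - {0} \<subseteq> {1 :: 'a}"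
    using primitive unfolding primitive_elem_def by (auto simp: power_0_left split: if_splits)
  hence "card (UNIV - {0 :: 'a}) \<le> card {1 :: 'a}" by (rule card_mono[rotated]) simp
  thus False using card_nonzero card_UNIV_ge_4 unfolding card_units_def by simp
qed

text \<open>Pigeonhole on \<alpha>^0, ..., \<alpha>^{q^n-1} gives a period e \<le> q^n - 1 of the powers of \<alpha>;
  since these powers exhaust the q^n - 1 nonzero elements, e \<ge> q^n - 1.\<close>

lemma alpha_pow_card_units: "\<alpha> ^ card_units = 1"
proof -
  have "(\<lambda>s. \<alpha> ^ s) ` {..card_units} \<subseteq> UNIV - {0}" using alpha_nonzero by auto
  hence "card ((\<lambda>s. \<alpha> ^ s) ` {..card_units}) \<le> card_units"
    using card_nonzero by (metis card_mono finite)
  hence "\<not> inj_on (\<lambda>s. \<alpha> ^ s) {..card_units}" by (auto dest: card_image)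
  then obtain x y where xy: "x \<le> card_units" "y \<le> card_units" "x \<noteq> y" "\<alpha> ^ x = \<alpha> ^ y"
    unfolding inj_on_def by blast
  obtain a b where ab: "a < b" "b \<le> card_units" "\<alpha> ^ a = \<alpha> ^ b"
  proof (cases "x < y")
    case True
    with xy that[of x y] show ?thesis by blast
  next
    case False
    with xy that[of y x] show ?thesis by simp
  qed
  define e where "e = b - a"
  have "\<alpha> ^ a * \<alpha> ^ e = \<alpha> ^ b" using ab(1) unfolding e_def by (simp flip: power_add)
  hence "\<alpha> ^ a * \<alpha> ^ e = \<alpha> ^ a * 1" using ab(3) by simp
  hence e: "\<alpha> ^ e = 1" using alpha_nonzero by simp
  have "UNIV - {0} \<subseteq> (\<lambda>s. \<alpha> ^ s) ` {..<e}"
  proof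
    fix x :: 'a assume "x \<in> UNIV - {0}"
    then obtain j where "\<alpha> ^ j = x" using primitive unfolding primitive_elem_def by auto
    hence "x = \<alpha> ^ (j mod e)" using power_mod_of_power_eq_1[OF e] by simp
    moreover have "j mod e < e" using ab(1) by (simp add: e_def)
    ultimately show "x \<in> (\<lambda>s. \<alpha> ^ s) ` {..<e}" by blast
  qed
  hence "card (UNIV - {0 :: 'a}) \<le> card ((\<lambda>s. \<alpha> ^ s) ` {..<e})" by (rule card_mono[rotated]) simp
  also have "\<dots> \<le> e" using card_image_le[of "{..<e}" "\<lambda>s. \<alpha> ^ s"] by simp
  finally have "e = card_units" using ab card_nonzero unfolding e_def by simp
  with e show ?thesis by simp
qed

lemma alpha_pow_mod: "\<alpha> ^ a = \<alpha> ^ (a mod card_units)"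
  by (rule power_mod_of_power_eq_1[OF alpha_pow_card_units])

lemma alpha_pow_image: "(\<lambda>s. \<alpha> ^ s) ` {..<card_units} = UNIV - {0}"
proof
  show "(\<lambda>s. \<alpha> ^ s) ` {..<card_units} \<subseteq> UNIV - {0}" using alpha_nonzero by auto
  show "UNIV - {0} \<subseteq> (\<lambda>s. \<alpha> ^ s) ` {..<card_units}"
  proof
    fix x :: 'a assume "x \<in> UNIV - {0}"
    then obtain j where "\<alpha> ^ j = x" using primitive unfolding primitive_elem_def by auto
    hence "\<alpha> ^ (j mod card_units) = x" using alpha_pow_mod by simp
    moreover have "j mod card_units < card_units" using card_units_pos by simp
    ultimately show "x \<in> (\<lambda>s. \<alpha> ^ s) ` {..<card_units}" by blast
  qed
qed

lemma inj_on_alpha_pow: "inj_on (\<lambda>s. \<alpha> ^ s) {..<card_units}"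
  by (rule eq_card_imp_inj_on) (simp_all add: alpha_pow_image card_nonzero)

lemma alpha_pow_eq_1_iff: "\<alpha> ^ a = 1 \<longleftrightarrow> card_units dvd a"
proof
  assume "\<alpha> ^ a = 1"
  hence "\<alpha> ^ (a mod card_units) = \<alpha> ^ 0" using alpha_pow_mod by simp
  moreover have "a mod card_units < card_units" "0 < card_units" using card_units_pos by auto
  ultimately have "a mod card_units = 0" using inj_on_alpha_pow unfolding inj_on_def by blast
  thus "card_units dvd a" by auto
next
  assume "card_units dvd a"
  then obtain c where "a = card_units * c" by blast
  thus "\<alpha> ^ a = 1" by (simp add: power_mult alpha_pow_card_units)
qed

lemma inj_on_alpha_pow_mult:
  assumes "N * r = card_units" shows "inj_on (\<lambda>s. \<alpha> ^ (N * s)) {..<r}"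
proof (rule inj_onI)
  fix s t assume "s \<in> {..<r}" "t \<in> {..<r}" and eq: "\<alpha> ^ (N * s) = \<alpha> ^ (N * t)"
  moreover have "N > 0" using assms card_units_pos by (cases N) auto
  ultimately have "N * s < card_units" "N * t < card_units" by (simp_all flip: assms)
  hence "N * s = N * t" using inj_on_alpha_pow eq unfolding inj_on_def by blast
  with \<open>N > 0\<close> show "s = t" by simp
qed

lemma q_eq_CHAR_power: "\<exists>e. q = CHAR('a) ^ e"
proof -
  obtain p e where pe: "prime p" "e > 0" "q = p ^ e" using prime_power unfolding is_prime_power_def by blast
  have char: "prime CHAR('a)" by (rule prime_CHAR_semidom, rule finite_imp_CHAR_pos) simp
  have "CHAR('a) dvd p ^ (e * n)" using CHAR_dvd_CARD[where ?'a='a] card_UNIV pe by (simp add: power_mult)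
  hence "CHAR('a) dvd p" using char prime_dvd_power by blast
  hence "CHAR('a) = p" using char pe(1) by (simp add: primes_dvd_imp_eq)
  thus ?thesis using pe by blast
qed

lemma frobenius_add: "((x::'a) + y) ^ (q ^ d) = x ^ (q ^ d) + y ^ (q ^ d)"
proof -
  obtain e where e: "q = CHAR('a) ^ e" using q_eq_CHAR_power by blast
  have char: "prime CHAR('a)" by (rule prime_CHAR_semidom, rule finite_imp_CHAR_pos) simp
  have "q ^ d = CHAR('a) ^ (e * d)" using e by (simp add: power_mult)
  thus ?thesis using freshmans_dream'[OF char] by blast
qed

lemma is_subfield_Fqm: "is_subfield (Fqm q d :: 'a set)"
proof -
  have "x - y \<in> Fqm q d" if "x \<in> Fqm q d" "y \<in> Fqm q d" for x y :: 'a
  proof -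
    have "x ^ (q ^ d) = (x - y) ^ (q ^ d) + y ^ (q ^ d)" using frobenius_add[of "x - y" y d] by simp
    thus ?thesis using that unfolding Fqm_def by (simp add: algebra_simps)
  qed
  moreover have "0 < q ^ d" using q_ge_2 by simp
  ultimately show ?thesis
    unfolding is_subfield_def Fqm_def by (simp add: frobenius_add power_mult_distrib power_inverse)
qed

lemma Fqm_mono:
  assumes "a dvd b" shows "Fqm q a \<subseteq> (Fqm q b :: 'a set)"
proof
  fix x :: 'a assume x: "x \<in> Fqm q a"
  obtain c where b: "b = a * c" using assms by blast
  have "x ^ (q ^ (a * c)) = x"
  proof (induction c)
    case (Suc c)
    have "x ^ (q ^ (a * Suc c)) = (x ^ (q ^ (a * c))) ^ (q ^ a)"
      by (simp add: power_add power_mult[symmetric] mult.commute)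
    thus ?case using Suc x unfolding Fqm_def by simp
  qed simp
  thus "x \<in> Fqm q b" unfolding Fqm_def b by simp
qed

lemma Fqm_nonzero:
  assumes "1 \<le> d" "N * (q ^ d - 1) = card_units"
  shows "Fqm q d - {0} = (\<lambda>s. \<alpha> ^ (N * s)) ` {..<q ^ d - 1}"
proof -
  have Qd: "2 \<le> q ^ d" using power_increasing[of 1 d q] q_ge_2 assms(1) by simp
  show ?thesis
  proof (intro Set.set_eqI iffI)
    fix x :: 'a assume x: "x \<in> Fqm q d - {0}"
    hence "x \<in> (\<lambda>s. \<alpha> ^ s) ` {..<card_units}" unfolding alpha_pow_image by simp
    then obtain s where s: "s < card_units" "\<alpha> ^ s = x" by auto
    have "x ^ (q ^ d - 1) * x = x ^ (q ^ d)" using Qd by (intro power_minus_mult) linarith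
    also have "\<dots> = x" using x unfolding Fqm_def by simp
    finally have "x ^ (q ^ d - 1) = 1" using x by simp
    hence "\<alpha> ^ (s * (q ^ d - 1)) = 1" using s by (simp add: power_mult)
    hence "N * (q ^ d - 1) dvd s * (q ^ d - 1)" using alpha_pow_eq_1_iff assms(2) by simp
    hence "N dvd s" using Qd by simp
    then obtain s' where s': "s = N * s'" by blast
    hence "s' < q ^ d - 1" using s(1) by (simp flip: assms(2))
    thus "x \<in> (\<lambda>s. \<alpha> ^ (N * s)) ` {..<q ^ d - 1}" using s s' by blast
  next
    fix x :: 'a assume "x \<in> (\<lambda>s. \<alpha> ^ (N * s)) ` {..<q ^ d - 1}"
    then obtain s where x: "x = \<alpha> ^ (N * s)" by blast
    have "x ^ (q ^ d - 1) = (\<alpha> ^ (N * (q ^ d - 1))) ^ s" unfolding x by (simp add: ac_simps flip: power_mult)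
    hence "x ^ (q ^ d - 1) = 1" using assms(2) alpha_pow_card_units by simp
    moreover have "x ^ (q ^ d - 1) * x = x ^ (q ^ d)" using Qd by (intro power_minus_mult) linarith
    ultimately have "x ^ (q ^ d) = x" by simp
    thus "x \<in> Fqm q d - {0}" using alpha_nonzero unfolding Fqm_def x by simp
  qed
qed

lemma card_Fqm:
  assumes "1 \<le> d" "d dvd n"
  shows "card (Fqm q d :: 'a set) = q ^ d"
proof -
  define N where "N = card_units div (q ^ d - 1)"
  have "(q ^ d - 1) dvd card_units"
    using power_minus_one_dvd[OF _ assms(2)] q_ge_2 unfolding card_units_def by simp
  hence N: "N * (q ^ d - 1) = card_units" unfolding N_def by simp
  have "card (Fqm q d - {0 :: 'a}) = q ^ d - 1"
    using Fqm_nonzero[OF assms(1) N] card_image[OF inj_on_alpha_pow_mult[OF N]] by simp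
  moreover have "(0::'a) \<in> Fqm q d" unfolding Fqm_def using q_ge_2 by simp
  hence "card (Fqm q d - {0 :: 'a}) = card (Fqm q d :: 'a set) - 1" "0 < card (Fqm q d :: 'a set)"
    by (auto simp: card_Diff_singleton card_gt_0_iff)
  moreover have "1 \<le> q ^ d" using q_ge_2 by simp
  ultimately show ?thesis by linarith
qed

lemma dim_Fq_eq_of_card:
  fixes W :: "'a set"
  assumes "subspace_over (Fqm q 1) W" "card W = q ^ e"
  shows "dim_Fq q W = e"
proof -
  have F: "is_subfield (Fqm q 1 :: 'a set)" by (rule is_subfield_Fqm)
  have cardF: "card (Fqm q 1 :: 'a set) = q" using card_Fqm[of 1] by simp
  obtain g j where g: "\<forall>t<j. g t \<in> W" "span_over (Fqm q 1) j g = W" "card W = q ^ j"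
    using subspace_over_basis[OF F assms(1)] unfolding cardF by blast
  have "j = e" using g(3) assms(2) q_ge_2 by (simp add: power_inject_exp)
  define vs where "vs = map g [0..<e]"
  have span_eq: "span_Fq q ws = span_over (Fqm q 1) (length ws) (\<lambda>i. ws ! i)" for ws
    unfolding span_Fq_def span_over_def by simp
  have "span_over (Fqm q 1) e (\<lambda>i. vs ! i) = span_over (Fqm q 1) e g"
    by (rule span_over_cong) (simp add: vs_def)
  hence "length vs = e \<and> set vs \<subseteq> W \<and> span_Fq q vs = W"
    unfolding span_eq using g \<open>j = e\<close> by (auto simp: vs_def)
  moreover have "e \<le> e'" if "length ws = e'" "span_Fq q ws = W" for ws e'
  proof -
    have "q ^ e \<le> q ^ e'"
      using card_span_over_le[OF F, of e' "\<lambda>i. ws ! i"] that assms(2) cardF unfolding span_eq by simp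
    thus "e \<le> e'" using q_ge_2 by (simp add: power_le_imp_le_exp)
  qed
  ultimately show ?thesis unfolding dim_Fq_def by (intro Least_equality) blast+
qed

lemma dim_Fq_Fqm:
  fixes W :: "'a set"
  assumes "1 \<le> d" "d dvd n" "subspace_over (Fqm q d) W" "card W = card (Fqm q d :: 'a set) ^ e"
  shows "dim_Fq q W = d * e"
proof (rule dim_Fq_eq_of_card)
  show "subspace_over (Fqm q 1) W" using subspace_over_subfield[OF assms(3) Fqm_mono[OF one_dvd]] .
  show "card W = q ^ (d * e)" using assms(4) card_Fqm[OF assms(1,2)] by (simp add: power_mult)
qed

text \<open>Distinct F_{q^d}-subspaces of equal size meet in a proper subspace of each and span a space
  properly containing each, which costs one F_{q^d}-dimension on either side.\<close>

lemma subspace_dist_ge: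
  fixes U U' :: "'a set"
  assumes d: "1 \<le> d" "d dvd n"
    and U: "subspace_over (Fqm q d) U" "subspace_over (Fqm q d) U'"
    and "card U = card U'" "U \<noteq> U'"
  shows "2 * d \<le> subspace_dist q U U'"
proof -
  let ?F = "Fqm q d :: 'a set"
  have F: "is_subfield ?F" by (rule is_subfield_Fqm)
  have I: "subspace_over ?F (U \<inter> U')" using subspace_over_Int[OF U] .
  have S: "subspace_over ?F (subsp_sum U U')" using subspace_over_subsp_sum[OF U] .
  obtain e where e: "card U = card ?F ^ e" using subspace_over_card_power[OF F U(1)] by blast
  obtain a where a: "card (U \<inter> U') = card ?F ^ a" using subspace_over_card_power[OF F I] by blast
  obtain b where b: "card (subsp_sum U U') = card ?F ^ b" using subspace_over_card_power[OF F S] by blast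
  have "U \<inter> U' \<noteq> U"
  proof
    assume "U \<inter> U' = U"
    hence "U \<subseteq> U'" by blast
    with assms(5,6) show False using card_subset_eq[of U' U] by simp
  qed
  hence "U \<inter> U' \<subset> U" by blast
  hence "a < e" using psubspace_exponent_less[OF F I U(1)] a e by blast
  moreover have "U \<noteq> subsp_sum U U'"
  proof
    assume "U = subsp_sum U U'"
    hence "U' \<subseteq> U" using subset_subsp_sum_right[OF U(1), of U'] by simp
    with assms(5,6) show False using card_subset_eq[of U U'] by simp
  qed
  hence "U \<subset> subsp_sum U U'" using subset_subsp_sum_left[OF U(2)] by blast
  hence "e < b" using psubspace_exponent_less[OF F U(1) S] e b by blast
  ultimately have "d * a + 2 * d \<le> d * b" using mult_le_mono2[of "a + 2" b d] by (simp add: algebra_simps)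
  moreover have "subspace_dist q U U' = d * b - d * a"
    unfolding subspace_dist_def using dim_Fq_Fqm[OF d S b] dim_Fq_Fqm[OF d I a] by simp
  ultimately show ?thesis by linarith
qed

end

section \<open>The subspaces of the tower flag\<close>

text \<open>In the notation of the theorem, m and M are m_i and m_{i+1}, \<beta> is \<alpha>_{i+1}, V j is the
  subspace F^i_j (for 1 \<le> j < L), and flag s is the codeword F^i \<alpha>^s.\<close>

locale subfield_tower = primitive_field q n \<alpha> for q n :: nat and \<alpha> :: "'a::{field,finite}" +
  fixes m M :: nat
  assumes m_pos: "0 < m" and m_less_M: "m < M" and m_dvd_M: "m dvd M" and M_dvd_n: "M dvd n"
begin

abbreviation K :: "'a set" where "K \<equiv> Fqm q m"

definition L :: nat where "L = M div m"

definition N :: nat where "N = card_units div (q ^ M - 1)"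

definition \<beta> :: 'a where "\<beta> = \<alpha> ^ N"

definition V :: "nat \<Rightarrow> 'a set" where "V j = span_over K j (\<lambda>t. \<beta> ^ t)"

lemma m_mult_L: "m * L = M"
  unfolding L_def using m_dvd_M by simp

lemma L_ge_2: "2 \<le> L"
proof -
  have "m * 1 < m * L" using m_less_M m_mult_L by simp
  thus ?thesis by simp
qed

lemma is_subfield_K: "is_subfield K"
  by (rule is_subfield_Fqm)

lemma card_K: "card K = q ^ m"
  using card_Fqm[of m] m_pos dvd_trans[OF m_dvd_M M_dvd_n] by simp

lemma card_K_ge_2: "2 \<le> card K"
  by (rule is_subfield_card_ge_2[OF is_subfield_K])

lemma N_mult: "N * (q ^ M - 1) = card_units"
proof -
  have "(q ^ M - 1) dvd card_units"
    using power_minus_one_dvd[OF _ M_dvd_n] q_ge_2 unfolding card_units_def by simp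
  thus ?thesis unfolding N_def by simp
qed

lemma beta_nonzero: "\<beta> \<noteq> 0"
  unfolding \<beta>_def using alpha_nonzero by simp

lemma Fqm_M_nonzero: "Fqm q M - {0} = (\<lambda>s. \<beta> ^ s) ` {..<q ^ M - 1}"
  using Fqm_nonzero[OF _ N_mult] m_less_M unfolding \<beta>_def by (simp add: power_mult)

lemma subspace_V: "subspace_over K (V j)"
  unfolding V_def by (rule subspace_over_span_over[OF is_subfield_K])

lemma beta_pow_in_V: "t < j \<Longrightarrow> \<beta> ^ t \<in> V j"
  unfolding V_def by (rule span_over_generator[OF is_subfield_K])

lemma V_0: "V 0 = {0}"
  unfolding V_def by (rule span_over_0[OF is_subfield_K])

lemma one_in_V: "1 \<le> j \<Longrightarrow> 1 \<in> V j"
  using beta_pow_in_V[of 0 j] by simp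

lemma V_1: "V 1 = K"
proof -
  have "V 1 = {c * \<beta> ^ 0 + x | c x. c \<in> K \<and> x \<in> V 0}"
    unfolding V_def using span_over_Suc[OF is_subfield_K, of 0] by simp
  thus ?thesis unfolding V_0 by auto
qed

lemma V_mono: "j \<le> j' \<Longrightarrow> V j \<subseteq> V j'"
  unfolding V_def
  by (rule span_over_subset[OF is_subfield_K subspace_V[unfolded V_def]])
     (simp add: beta_pow_in_V[unfolded V_def])

lemma scale_beta_V_subset:
  assumes "subspace_over K W" "\<And>t. t < j \<Longrightarrow> \<beta> ^ Suc t \<in> W"
  shows "scale \<beta> (V j) \<subseteq> W"
proof
  fix y assume "y \<in> scale \<beta> (V j)"
  then obtain x where "x \<in> V j" "y = x * \<beta>" unfolding scale_def by blast
  hence "y \<in> span_over K j (\<lambda>t. \<beta> ^ t * \<beta>)" unfolding V_def using span_over_mult_right by blast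
  moreover have "span_over K j (\<lambda>t. \<beta> ^ t * \<beta>) \<subseteq> W"
    using assms by (intro span_over_subset[OF is_subfield_K]) (simp_all add: mult.commute)
  ultimately show "y \<in> W" by blast
qed

lemma scale_beta_V: "scale \<beta> (V j) \<subseteq> V (Suc j)"
  by (rule scale_beta_V_subset[OF subspace_V], rule beta_pow_in_V) simp

lemma card_V_le: "card (V j) \<le> card K ^ j"
  unfolding V_def by (rule card_span_over_le[OF is_subfield_K])

text \<open>A \<beta>-stable V_j would contain all powers of \<beta>, hence all of F_{q^M}, which is too large
  for j < L.\<close>

lemma V_not_beta_stable:
  assumes "1 \<le> j" "j < L"
  shows "\<not> scale \<beta> (V j) \<subseteq> V j"
proof
  assume stable: "scale \<beta> (V j) \<subseteq> V j"
  have pow: "\<beta> ^ r \<in> V j" for r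
  proof (induction r)
    case 0 then show ?case using one_in_V[OF assms(1)] by simp
  next
    case (Suc r)
    hence "\<beta> ^ r * \<beta> \<in> scale \<beta> (V j)" unfolding scale_def by blast
    with stable show ?case by (auto simp: mult.commute)
  qed
  have "Fqm q M \<subseteq> V j"
  proof
    fix x :: 'a assume "x \<in> Fqm q M"
    show "x \<in> V j"
    proof (cases "x = 0")
      case True then show ?thesis using subspace_over_0[OF subspace_V] by simp
    next
      case False
      hence "x \<in> (\<lambda>s. \<beta> ^ s) ` {..<q ^ M - 1}" using \<open>x \<in> Fqm q M\<close> Fqm_M_nonzero by blast
      then show ?thesis using pow by blast
    qed
  qed
  hence "q ^ M \<le> card (V j)" using card_Fqm[OF _ M_dvd_n] m_less_M card_mono[of "V j" "Fqm q M"] by simp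
  also have "\<dots> \<le> q ^ (m * j)" using card_V_le[of j] card_K by (simp add: power_mult)
  also have "\<dots> < q ^ M"
  proof -
    have "m * j < m * L" using assms(2) m_pos by simp
    thus ?thesis using m_mult_L q_ge_2 by (intro power_strict_increasing) auto
  qed
  finally show False by simp
qed

lemma beta_pow_notin_V:
  assumes "j < L" shows "\<beta> ^ j \<notin> V j"
proof
  assume in_V: "\<beta> ^ j \<in> V j"
  have "1 \<le> j" using in_V V_0 by (cases j) auto
  have "scale \<beta> (V j) \<subseteq> V j"
  proof (rule scale_beta_V_subset[OF subspace_V])
    fix t assume "t < j"
    thus "\<beta> ^ Suc t \<in> V j" using in_V beta_pow_in_V[of "Suc t" j] by (cases "Suc t = j") auto
  qed
  thus False using V_not_beta_stable[OF \<open>1 \<le> j\<close> assms] by simp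
qed

lemma card_V: "j \<le> L \<Longrightarrow> card (V j) = card K ^ j"
proof (induction j)
  case 0 then show ?case using V_0 by simp
next
  case (Suc j)
  have "V (Suc j) = {c * \<beta> ^ j + x | c x. c \<in> K \<and> x \<in> V j}"
    unfolding V_def by (rule span_over_Suc[OF is_subfield_K])
  moreover have "\<beta> ^ j \<notin> V j" using beta_pow_notin_V Suc.prems by simp
  ultimately have "card (V (Suc j)) = card K * card (V j)"
    using card_subspace_extension[OF is_subfield_K subspace_V] by simp
  thus ?case using Suc by simp
qed

lemma card_V_Int_scale_beta:
  assumes "1 \<le> j" "j < L"
  shows "card (V j \<inter> scale \<beta> (V j)) = card K ^ (j - 1)"
proof -
  let ?W = "V j \<inter> scale \<beta> (V j)"
  have W: "subspace_over K ?W" using subspace_over_Int[OF subspace_V subspace_over_scale[OF subspace_V]] .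
  obtain c where c: "card ?W = card K ^ c" using subspace_over_card_power[OF is_subfield_K W] by blast
  have "scale \<beta> (V (j - 1)) \<subseteq> ?W"
    using scale_beta_V[of "j - 1"] V_mono[of "j - 1" j] assms(1) unfolding scale_def by auto
  hence "card (scale \<beta> (V (j - 1))) \<le> card ?W" by (rule card_mono[rotated]) simp
  hence "card K ^ (j - 1) \<le> card K ^ c" using card_scale[OF beta_nonzero] card_V[of "j - 1"] assms c by simp
  hence "j - 1 \<le> c" using card_K_ge_2 by (simp add: power_le_imp_le_exp)
  moreover have "?W \<noteq> V j"
  proof
    assume "?W = V j"
    hence "V j \<subseteq> scale \<beta> (V j)" by blast
    hence "V j = scale \<beta> (V j)" using card_scale[OF beta_nonzero, of "V j"] by (simp add: card_subset_eq)
    thus False using V_not_beta_stable[OF assms] by simp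
  qed
  hence "c < j" using psubspace_exponent_less[OF is_subfield_K W subspace_V] c card_V[of j] assms by auto
  ultimately have "c = j - 1" by linarith
  thus ?thesis using c by simp
qed

lemma stabilizer_V:
  assumes "1 \<le> j" "j < L"
  shows "stabilizer (V j) = K"
proof -
  let ?A = "stabilizer (V j)"
  have A: "is_subfield ?A" using is_subfield_stabilizer[OF is_subfield_K subspace_V] .
  have KA: "K \<subseteq> ?A" using subfield_subset_stabilizer[OF subspace_V] .
  have VA: "subspace_over ?A (V j)" using subspace_over_stabilizer[OF subspace_V] .
  have WA: "subspace_over ?A (V j \<inter> scale \<beta> (V j))"
    using subspace_over_Int[OF VA subspace_over_scale[OF VA]] .
  obtain d where d: "card ?A = card K ^ d"
    using subspace_over_card_power[OF is_subfield_K subspace_over_subfield_superset[OF A KA]] by blast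
  obtain a where a: "card (V j) = card ?A ^ a" using subspace_over_card_power[OF A VA] by blast
  obtain b where b: "card (V j \<inter> scale \<beta> (V j)) = card ?A ^ b"
    using subspace_over_card_power[OF A WA] by blast
  have "card K ^ j = card K ^ (d * a)" using a d card_V[of j] assms by (simp add: power_mult)
  hence "j = d * a" using card_K_ge_2 by (simp add: power_inject_exp)
  moreover have "card K ^ (j - 1) = card K ^ (d * b)"
    using b d card_V_Int_scale_beta[OF assms] by (simp add: power_mult)
  hence "j - 1 = d * b" using card_K_ge_2 by (simp add: power_inject_exp)
  ultimately have "d * a = d * b + 1" using assms(1) by linarith
  hence "d dvd 1" by (metis dvd_add_right_iff dvd_triv_left)
  hence "d = 1" by simp
  hence "K = ?A" using d KA by (intro card_subset_eq) simp_all
  thus ?thesis by simp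
qed

lemma subspace_dist_V_scale_beta:
  assumes "1 \<le> j" "j < L"
  shows "subspace_dist q (V j) (scale \<beta> (V j)) = 2 * m"
proof -
  have m: "1 \<le> m" "m dvd n" using m_pos dvd_trans[OF m_dvd_M M_dvd_n] by auto
  have U: "subspace_over K (V j)" "subspace_over K (scale \<beta> (V j))"
    using subspace_V subspace_over_scale by blast+
  have ne: "V j \<noteq> scale \<beta> (V j)" using V_not_beta_stable[OF assms] by auto
  have "2 * m \<le> subspace_dist q (V j) (scale \<beta> (V j))"
    using subspace_dist_ge[OF m U _ ne] card_scale[OF beta_nonzero] by simp
  moreover have "subspace_dist q (V j) (scale \<beta> (V j)) \<le> 2 * m"
  proof -
    let ?S = "subsp_sum (V j) (scale \<beta> (V j))"
    have S: "subspace_over K ?S" using subspace_over_subsp_sum[OF U] .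
    obtain b where b: "card ?S = card K ^ b" using subspace_over_card_power[OF is_subfield_K S] by blast
    have "?S \<subseteq> V (Suc j)" using subsp_sum_subset[OF subspace_V V_mono scale_beta_V] by simp
    hence "card K ^ b \<le> card K ^ Suc j"
      using b card_V[of "Suc j"] assms card_mono[of "V (Suc j)" ?S] by simp
    moreover have "1 < card K" using card_K_ge_2 by simp
    ultimately have "b \<le> Suc j" using power_le_imp_le_exp by blast
    moreover have "subspace_dist q (V j) (scale \<beta> (V j)) = m * b - m * (j - 1)"
      unfolding subspace_dist_def
      using dim_Fq_Fqm[OF m S b] dim_Fq_Fqm[OF m subspace_over_Int[OF U] card_V_Int_scale_beta[OF assms]]
      by simp
    moreover have "m * b \<le> m * (j - 1) + 2 * m"
      using mult_le_mono2[OF \<open>b \<le> Suc j\<close>, of m] assms(1) by (cases j) (simp_all add: algebra_simps)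
    ultimately show ?thesis by linarith
  qed
  ultimately show ?thesis by simp
qed

end

section \<open>The orbit code\<close>

lemma min_dist_eqI:
  assumes "finite C" "x0 \<in> C" "y0 \<in> C" "x0 \<noteq> y0" "d x0 y0 = v"
    and "\<And>x y. x \<in> C \<Longrightarrow> y \<in> C \<Longrightarrow> x \<noteq> y \<Longrightarrow> v \<le> d x y"
  shows "min_dist d C = v"
proof -
  define D where "D = {d x y | x y. x \<in> C \<and> y \<in> C \<and> x \<noteq> y}"
  have "card {x0, y0} \<le> card C" using assms(1-3) by (intro card_mono) auto
  hence "\<not> card C \<le> 1" using assms(4) by simp
  moreover have "finite D"
    unfolding D_def by (rule finite_subset[of _ "(\<lambda>(x, y). d x y) ` (C \<times> C)"]) (use assms(1) in auto)
  moreover have "v \<in> D" unfolding D_def using assms(2-5) by auto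
  moreover have "v \<le> w" if "w \<in> D" for w using that assms(6) unfolding D_def by auto
  ultimately show ?thesis unfolding min_dist_def D_def[symmetric] by (simp add: Min_eqI)
qed

context subfield_tower
begin

definition flag :: "nat \<Rightarrow> 'a set list" where
  "flag s = map (\<lambda>j. scale (\<alpha> ^ s) (V j)) [1..<L]"

lemma tower_flag_eq: "tower_flag q m L \<beta> = map V [1..<L]"
  unfolding tower_flag_def V_def span_over_def by simp

lemma flag_orbit_tower_flag: "flag_orbit \<alpha> (tower_flag q m L \<beta>) = range flag"
  unfolding tower_flag_eq flag_orbit_def flag_def scale_def by (auto simp: comp_def)

lemma length_flag: "length (flag s) = L - 1"
  unfolding flag_def by simp

lemma nth_flag: "j < L - 1 \<Longrightarrow> flag s ! j = scale (\<alpha> ^ s) (V (Suc j))"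
  unfolding flag_def by simp

lemma finite_range_flag: "finite (range flag)"
proof -
  have "flag s \<in> flag ` {..<card_units}" for s
  proof (rule image_eqI)
    show "flag s = flag (s mod card_units)" unfolding flag_def using alpha_pow_mod[of s] by simp
    show "s mod card_units \<in> {..<card_units}" using card_units_pos by simp
  qed
  hence "range flag \<subseteq> flag ` {..<card_units}" by blast
  thus ?thesis by (rule finite_subset) simp
qed

lemma subspace_nth_flag: "j < L - 1 \<Longrightarrow> subspace_over K (flag s ! j)"
  unfolding nth_flag by (rule subspace_over_scale[OF subspace_V])

lemma card_nth_flag:
  assumes "j < L - 1" shows "card (flag s ! j) = card (flag t ! j)"
proof -
  have "card (flag r ! j) = card (V (Suc j))" for r
    unfolding nth_flag[OF assms] by (rule card_scale) (simp add: alpha_nonzero)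
  thus ?thesis by simp
qed

lemma flag_eq_of_nth_eq:
  assumes j: "j < L - 1" and eq: "flag s ! j = flag t ! j"
  shows "flag s = flag t"
proof -
  define x where "x = \<alpha> ^ s * inverse (\<alpha> ^ t)"
  have x_nonzero: "x \<noteq> 0" unfolding x_def using alpha_nonzero by simp
  have x_t: "x * \<alpha> ^ t = \<alpha> ^ s" unfolding x_def using alpha_nonzero by simp
  have "scale (inverse (\<alpha> ^ t)) (scale (\<alpha> ^ s) (V (Suc j)))
      = scale (inverse (\<alpha> ^ t)) (scale (\<alpha> ^ t) (V (Suc j)))"
    using eq j by (simp add: nth_flag)
  hence "scale x (V (Suc j)) = V (Suc j)" unfolding scale_scale x_def using alpha_nonzero by simp
  hence "x \<in> stabilizer (V (Suc j))" unfolding scale_def stabilizer_def by (auto simp: mult.commute)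
  hence "x \<in> K" using stabilizer_V[of "Suc j"] j by simp
  have "scale (\<alpha> ^ s) (V l) = scale (\<alpha> ^ t) (V l)" for l
  proof -
    have "scale (\<alpha> ^ s) (V l) = scale (\<alpha> ^ t) (scale x (V l))" using scale_scale[of "\<alpha> ^ t" x] x_t by simp
    also have "scale x (V l) = V l" by (rule scale_subfield_element[OF subspace_V \<open>x \<in> K\<close> x_nonzero])
    finally show ?thesis .
  qed
  thus ?thesis unfolding flag_def by simp
qed

lemma nth_flag_0_N: "j < L - 1 \<Longrightarrow> flag 0 ! j = V (Suc j) \<and> flag N ! j = scale \<beta> (V (Suc j))"
  by (simp add: nth_flag \<beta>_def)

lemma flag_0_ne_flag_N: "flag 0 \<noteq> flag N"
proof
  assume eq: "flag 0 = flag N"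
  have pos: "0 < L - 1" using L_ge_2 by simp
  have "V 1 = flag 0 ! 0" using nth_flag_0_N[OF pos] by simp
  also have "\<dots> = flag N ! 0" using eq by simp
  also have "\<dots> = scale \<beta> (V 1)" using nth_flag_0_N[OF pos] by simp
  finally show False using V_not_beta_stable[of 1] L_ge_2 by simp
qed

lemma subspace_dist_nth_flag_ge:
  assumes "flag s \<noteq> flag t" "j < L - 1"
  shows "2 * m \<le> subspace_dist q (flag s ! j) (flag t ! j)"
proof (rule subspace_dist_ge)
  show "1 \<le> m" "m dvd n" using m_pos dvd_trans[OF m_dvd_M M_dvd_n] by auto
  show "subspace_over K (flag s ! j)" "subspace_over K (flag t ! j)"
    using subspace_nth_flag[OF assms(2)] by blast+
  show "card (flag s ! j) = card (flag t ! j)" using card_nth_flag[OF assms(2)] .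
  show "flag s ! j \<noteq> flag t ! j" using flag_eq_of_nth_eq[OF assms(2)] assms(1) by blast
qed

lemma subspace_dist_nth_flag_0_N: "j < L - 1 \<Longrightarrow> subspace_dist q (flag 0 ! j) (flag N ! j) = 2 * m"
  using nth_flag_0_N subspace_dist_V_scale_beta[of "Suc j"] by simp

lemma min_dist_flags: "min_dist (flag_dist q) (range flag) = (L - 1) * (2 * m)"
proof (rule min_dist_eqI[OF finite_range_flag _ _ flag_0_ne_flag_N])
  show "flag_dist q (flag 0) (flag N) = (L - 1) * (2 * m)"
    unfolding flag_dist_def length_flag by (simp add: subspace_dist_nth_flag_0_N)
  fix F G assume "F \<in> range flag" "G \<in> range flag" "F \<noteq> G"
  then obtain s t where st: "F = flag s" "G = flag t" "flag s \<noteq> flag t" by blast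
  have "(\<Sum>j<L - 1. 2 * m) \<le> (\<Sum>j<L - 1. subspace_dist q (flag s ! j) (flag t ! j))"
    using subspace_dist_nth_flag_ge[OF st(3)] by (intro sum_mono) simp
  thus "(L - 1) * (2 * m) \<le> flag_dist q F G" unfolding flag_dist_def st length_flag by simp
qed simp_all

lemma projected_code_flags: "projected_code (range flag) j = (\<lambda>F. F ! j) ` range flag"
  unfolding projected_code_def by auto

lemma disjoint_code_flags: "disjoint_code (L - 1) (range flag)"
  unfolding disjoint_code_def projected_code_flags
proof (intro allI impI)
  fix j assume "j < L - 1"
  hence "inj_on (\<lambda>F. F ! j) (range flag)" using flag_eq_of_nth_eq by (auto simp: inj_on_def)
  thus "card ((\<lambda>F. F ! j) ` range flag) = card (range flag)" by (rule card_image)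
qed

lemma min_dist_projected_code_flags:
  assumes "j < L - 1"
  shows "min_dist (subspace_dist q) (projected_code (range flag) j) = 2 * m"
  unfolding projected_code_flags
proof (rule min_dist_eqI)
  show "flag 0 ! j \<noteq> flag N ! j" using flag_eq_of_nth_eq[OF assms] flag_0_ne_flag_N by blast
  show "subspace_dist q (flag 0 ! j) (flag N ! j) = 2 * m" using subspace_dist_nth_flag_0_N[OF assms] .
  fix U U' assume "U \<in> (\<lambda>F. F ! j) ` range flag" "U' \<in> (\<lambda>F. F ! j) ` range flag" "U \<noteq> U'"
  then obtain s t where st: "U = flag s ! j" "U' = flag t ! j" "flag s ! j \<noteq> flag t ! j" by blast
  hence "flag s \<noteq> flag t" by auto
  thus "2 * m \<le> subspace_dist q U U'" using subspace_dist_nth_flag_ge[OF _ assms] st by simp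
qed simp_all

lemma L_minus_1_mult: "(L - 1) * (2 * m) = 2 * (M - m)"
  using m_mult_L by (simp add: diff_mult_distrib diff_mult_distrib2 mult.commute mult.left_commute)

lemma consistent_code_flags: "consistent_code q (L - 1) (range flag)"
  unfolding consistent_code_def
  using disjoint_code_flags min_dist_flags min_dist_projected_code_flags by simp

lemma best_friend_code_flags: "best_friend_code q n m (range flag)"
  unfolding best_friend_code_def
proof (intro conjI allI impI)
  have m_dvd_n: "m dvd n" using dvd_trans[OF m_dvd_M M_dvd_n] .
  show "friend_code q n m (range flag)"
    unfolding friend_code_def
  proof (intro conjI ballI)
    fix F U assume "F \<in> range flag" "U \<in> set F"
    then obtain s j where "U = scale (\<alpha> ^ s) (V j)" unfolding flag_def by auto
    hence "subspace_over K U" using subspace_over_scale[OF subspace_V] by simp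
    thus "friend_subspace q n m U" unfolding friend_subspace_def subspace_over_def using m_dvd_n by simp
  qed (rule m_dvd_n)
  fix m' assume "friend_code q n m' (range flag)"
  moreover have "V 1 \<in> set (flag 0)" unfolding flag_def using L_ge_2 by force
  ultimately have "friend_subspace q n m' (V 1)" unfolding friend_code_def by blast
  hence "\<forall>c\<in>Fqm q m'. c * 1 \<in> V 1" using one_in_V[of 1] unfolding friend_subspace_def by blast
  thus "Fqm q m' \<subseteq> K" using V_1 by auto
qed

end

lemma chain_rel:
  assumes "reflp R" "transp R" "\<And>i. a \<le> i \<Longrightarrow> i < b \<Longrightarrow> R (f i) (f (Suc i))" "a \<le> b"
  shows "R (f a) (f b)"
proof (rule dec_induct[where P = "\<lambda>c. R (f a) (f c)", OF assms(4)])
  show "R (f a) (f a)" using assms(1) by (rule reflpD)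
  fix i assume "a \<le> i" "i < b" "R (f a) (f i)"
  thus "R (f a) (f (Suc i))" using assms(3) transpD[OF assms(2)] by blast
qed

lemma divisor_chain:
  fixes m :: "nat \<Rightarrow> nat"
  assumes m_pos: "0 < m 1"
    and m_mono: "\<And>i. 1 \<le> i \<Longrightarrow> i \<le> k \<Longrightarrow> m i < m (i + 1)"
    and m_dvd: "\<And>i. 1 \<le> i \<Longrightarrow> i \<le> k \<Longrightarrow> m i dvd m (i + 1)"
    and i: "1 \<le> i" "i \<le> k"
  shows "0 < m i" "m (i + 1) dvd m (k + 1)" "2 \<le> m (k + 1)"
proof -
  have le_step: "m j \<le> m (Suc j)" and dvd_step: "m j dvd m (Suc j)" if "1 \<le> j" "j < k + 1" for j
    using m_mono[of j] m_dvd[of j] that by simp_all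
  have "m 1 \<le> m i" using chain_rel[of "(\<le>)" 1 i m] le_step i by (simp add: reflp_def transp_def)
  thus "0 < m i" using m_pos by simp
  show dvd: "m (i + 1) dvd m (k + 1)"
    using chain_rel[of "(dvd)" "i + 1" "k + 1" m] dvd_step i
    by (simp add: reflp_def transp_def dvd_trans[of _ _ "_ :: nat"])
  have "m 1 \<le> m (k + 1)" using chain_rel[of "(\<le>)" 1 "k + 1" m] le_step by (simp add: reflp_def transp_def)
  hence "m (i + 1) \<le> m (k + 1)" using dvd m_pos by (simp add: dvd_imp_le)
  moreover have "m 1 \<le> m i" "m i < m (i + 1)" using \<open>m 1 \<le> m i\<close> m_mono[OF i] by simp_all
  ultimately show "2 \<le> m (k + 1)" using m_pos by linarith
qed

theorem mainTheorem9:
  fixes q n k i :: nat and m :: "nat \<Rightarrow> nat" and \<alpha> :: "'a::{field,finite}"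
  assumes q: "is_prime_power q"
    and card: "card (UNIV :: 'a set) = q ^ n"
    and m_pos: "0 < m 1"
    and m_mono: "\<And>i. 1 \<le> i \<Longrightarrow> i \<le> k \<Longrightarrow> m i < m (i + 1)"
    and m_dvd: "\<And>i. 1 \<le> i \<Longrightarrow> i \<le> k \<Longrightarrow> m i dvd m (i + 1)"
    and m_last: "m (k + 1) = n"
    and prim: "primitive_elem \<alpha>"
    and i: "1 \<le> i" "i \<le> k"
  shows "let \<alpha>' = (\<lambda>l. \<alpha> ^ ((q ^ n - 1) div (q ^ m l - 1)));
             L = m (i + 1) div m i;
             C = flag_orbit \<alpha> (tower_flag q (m i) L (\<alpha>' (i + 1)))
         in consistent_code q (L - 1) C
            \<and> min_dist (flag_dist q) C = 2 * (m (i + 1) - m i)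
            \<and> best_friend_code q n (m i) C"
proof -
  obtain m_i_pos: "0 < m i" and dvd_n: "m (i + 1) dvd n" and n_ge_2: "2 \<le> n"
    using divisor_chain[OF m_pos m_mono m_dvd i] m_last by simp
  interpret subfield_tower q n \<alpha> "m i" "m (i + 1)"
    using q card n_ge_2 prim m_i_pos m_mono[OF i] m_dvd[OF i] dvd_n by unfold_locales
  have "\<alpha> ^ ((q ^ n - 1) div (q ^ m (i + 1) - 1)) = \<beta>"
    unfolding \<beta>_def N_def card_units_def ..
  thus ?thesis
    unfolding Let_def L_def[symmetric] using flag_orbit_tower_flag consistent_code_flags
      min_dist_flags L_minus_1_mult best_friend_code_flags by simp
qed

end
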